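(* Let $\mathcal{C}$ be a contraction indicator of order $n$. Define an assignment $Z$ on $S(n)$ by $$Z(G)=\{v\in V(G): \exists\, H\in S_2(n),\ w\in V(H)\text{ with }\ell(w)\in\mathcal{C},\ G\rightsquigarrow H,\ v\rightsquigarrow w\}.$$ Then $Z$ is a smooth extremal assignment.
   Context: $[n]=\{1,\dots,n\}$. A stable $n$-labeled tree is a finite tree with $n$ leaves labeled bijectively by $[n]$, all internal vertices of degree $\ge 3$; $V(G)$ its internal vertices; $S(n)$ the set of such trees up to label-preserving isomorphism and $S_2(n)$ those with exactly 2 internal vertices. For a vertex $w$, $\ell(w)$ is the set of labels of leaves adjacent to $w$. $G\rightsquigarrow G'$: $G'$ obtained by collapsing connected sets of internal vertices, inducing surjection $\pi:V(G)\to V(G')$; $v\rightsquigarrow w$ means $\pi(v)=w$. An extremal assignment of order $n$: rule $Z(G)\subset V(G)$ for $G\in S(n)$ with (a) $Z(G)\ne V(G)$, (b) if $G\rightsquigarrow G'$ and $\pi^{-1}(v')=\{v_1,\dots,v_k\}$ then $v'\in Z(G')\iff v_1,\dots,v_k\in Z(G)$. $Z$ is smooth if for every $G$ and $v\in Z(G)$ there exist $G'\in S_2(n)$, $v'\in Z(G')$ with $G\rightsquigarrow G'$, $v\rightsquigarrow v'$. A contraction indicator is a collection $\mathcal{C}$ of subsets of $[n]$ with (1) $2\le|B|\le n-2$ for $B\in\mathcal{C}$; (2) $B\in\mathcal{C}$, $B'\subset B$, $|B'|\ge2$ imply $B'\in\mathcal{C}$; (3) $B_1\cup B_2\ne[n]$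 for $B_1,B_2\in\mathcal{C}$. *)

theory Defs
  imports Main
begin

text \<open>Internal vertices are
  natural numbers (the set IV); IE is the (symmetric, irreflexive) set of edges
  between internal vertices, given as ordered pairs in both directions; leaf i
  (for i in {1..n}) is attached to the internal vertex att i.  Trees are
  considered concretely; isomorphisms are special cases of contractions.\<close>

record stree =
  IV :: "nat set"
  IE :: "(nat \<times> nat) set"
  att :: "nat \<Rightarrow> nat"

definition labels :: "nat \<Rightarrow> stree \<Rightarrow> nat \<Rightarrow> nat set" where
  "labels n G w = {i \<in> {1..n}. att G i = w}"

definition vdeg :: "nat \<Rightarrow> stree \<Rightarrow> nat \<Rightarrow> nat" where
  "vdeg n G v = card {w. (v, w) \<in> IE G} + card (labels n G v)"

text \<open>The internal graph is a tree: connected, and every edge is a bridge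
  (i.e. minimally connected, equivalently acyclic).\<close>
definition is_tree_graph :: "nat set \<Rightarrow> (nat \<times> nat) set \<Rightarrow> bool" where
  "is_tree_graph V E \<longleftrightarrow>
     finite V \<and> V \<noteq> {} \<and> E \<subseteq> V \<times> V \<and> sym E \<and> irrefl E \<and>
     (\<forall>x\<in>V. \<forall>y\<in>V. (x, y) \<in> E\<^sup>*) \<and>
     (\<forall>(x, y)\<in>E. (x, y) \<notin> (E - {(x, y), (y, x)})\<^sup>*)"

definition stable_tree :: "nat \<Rightarrow> stree \<Rightarrow> bool" where
  "stable_tree n G \<longleftrightarrow>
     is_tree_graph (IV G) (IE G) \<and>
     (\<forall>i\<in>{1..n}. att G i \<in> IV G) \<and>
     (\<forall>v\<in>IV G. vdeg n G v \<ge> 3)"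

definition S2 :: "nat \<Rightarrow> stree \<Rightarrow> bool" where
  "S2 n G \<longleftrightarrow> stable_tree n G \<and> card (IV G) = 2"

text \<open>G \<rightsquigarrow> G' via \<pi>: G' is obtained from G by collapsing connected sets of
  internal vertices (the fibres of \<pi>).\<close>
definition contracts :: "nat \<Rightarrow> stree \<Rightarrow> stree \<Rightarrow> (nat \<Rightarrow> nat) \<Rightarrow> bool" where
  "contracts n G G' \<pi> \<longleftrightarrow>
     stable_tree n G \<and> stable_tree n G' \<and>
     \<pi> ` IV G = IV G' \<and>
     (\<forall>i\<in>{1..n}. att G' i = \<pi> (att G i)) \<and>
     (\<forall>v' w'. (v', w') \<in> IE G' \<longleftrightarrow>
        v' \<noteq> w' \<and> (\<exists>v w. (v, w) \<in> IE G \<and> \<pi> v = v' \<and> \<pi> w = w')) \<and>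
     (\<forall>v'\<in>IV G'. \<forall>x\<in>IV G. \<forall>y\<in>IV G. \<pi> x = v' \<longrightarrow> \<pi> y = v' \<longrightarrow>
        (x, y) \<in> (IE G \<inter> {(a, b). \<pi> a = v' \<and> \<pi> b = v'})\<^sup>*)"

definition extremal_assignment :: "nat \<Rightarrow> (stree \<Rightarrow> nat set) \<Rightarrow> bool" where
  "extremal_assignment n Z \<longleftrightarrow>
     (\<forall>G. stable_tree n G \<longrightarrow> Z G \<subseteq> IV G \<and> Z G \<noteq> IV G) \<and>
     (\<forall>G G' \<pi>. contracts n G G' \<pi> \<longrightarrow>
        (\<forall>v'\<in>IV G'. v' \<in> Z G' \<longleftrightarrow> (\<forall>v\<in>IV G. \<pi> v = v' \<longrightarrow> v \<in> Z G)))"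

definition smooth :: "nat \<Rightarrow> (stree \<Rightarrow> nat set) \<Rightarrow> bool" where
  "smooth n Z \<longleftrightarrow>
     (\<forall>G. stable_tree n G \<longrightarrow> (\<forall>v\<in>Z G.
        \<exists>G' \<pi>. S2 n G' \<and> contracts n G G' \<pi> \<and> \<pi> v \<in> Z G'))"

definition contraction_indicator :: "nat \<Rightarrow> nat set set \<Rightarrow> bool" where
  "contraction_indicator n C \<longleftrightarrow>
     (\<forall>B\<in>C. B \<subseteq> {1..n} \<and> 2 \<le> card B \<and> card B + 2 \<le> n) \<and>
     (\<forall>B\<in>C. \<forall>B'. B' \<subseteq> B \<and> 2 \<le> card B' \<longrightarrow> B' \<in> C) \<and>
     (\<forall>B1\<in>C. \<forall>B2\<in>C. B1 \<union> B2 \<noteq> {1..n})"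

definition Z_of :: "nat \<Rightarrow> nat set set \<Rightarrow> stree \<Rightarrow> nat set" where
  "Z_of n C G = {v \<in> IV G. \<exists>H \<pi> w. S2 n H \<and> w \<in> IV H \<and> labels n H w \<in> C \<and>
                     contracts n G H \<pi> \<and> \<pi> v = w}"

end

theory Submission
  imports Defs
begin

text \<open>Deleting an edge \<open>(x, y)\<close> of a stable tree splits it into two sides, each carrying
  at least two labels, and collapsing both sides yields a two-vertex tree; conversely every
  contraction onto a two-vertex tree arises this way. So \<open>Z(G)\<close> is the union of the sides
  whose label sets lie in \<open>\<C>\<close>, and pulling \<open>Z\<close> back along a contraction is just composition
  of contractions. To push \<open>Z\<close> forward, let \<open>F\<close> be a (connected) fibre lying in \<open>Z(G)\<close>.
  The largest \<open>\<C>\<close>-side meeting \<open>F\<close> contains \<open>F\<close>: otherwise the far end of its edge lies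
  in \<open>F\<close>, hence in some \<open>\<C>\<close>-side, and since no two \<open>\<C>\<close>-sides cover \<open>[n]\<close> that side would
  be strictly larger. The smallest \<open>\<C>\<close>-side containing \<open>F\<close> is rooted in \<open>F\<close>, since \<open>\<C>\<close> is
  closed under subsets; so its edge survives the contraction and gives the required two-vertex
  tree. Finally \<open>Z(G) = V(G)\<close> is impossible: pushing forward to the one-vertex tree would put
  its vertex into \<open>Z\<close>, but it has no two-vertex contraction.\<close>

definition side :: "stree \<Rightarrow> nat \<Rightarrow> nat \<Rightarrow> nat set" where
  "side G x y = {z. (x, z) \<in> (IE G - {(x, y), (y, x)})\<^sup>*}"

definition labels_on :: "nat \<Rightarrow> stree \<Rightarrow> nat set \<Rightarrow> nat set" where
  "labels_on n G S = {i \<in> {1..n}. att G i \<in> S}"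

lemma rtrancl_first_step_avoiding:
  assumes "(a, b) \<in> R\<^sup>*" "b \<noteq> a"
  shows "\<exists>z. (a, z) \<in> R \<and> (z, b) \<in> (R \<inter> {(u, w). u \<noteq> a \<and> w \<noteq> a})\<^sup>*"
  using assms
proof (induction rule: rtrancl_induct)
  case (step w b)
  show ?case
  proof (cases "w = a")
    case False
    then obtain z where "(a, z) \<in> R" "(z, w) \<in> (R \<inter> {(u, w). u \<noteq> a \<and> w \<noteq> a})\<^sup>*"
      using step by blast
    moreover have "(w, b) \<in> R \<inter> {(u, w). u \<noteq> a \<and> w \<noteq> a}" using step False by auto
    ultimately show ?thesis by (meson rtrancl_into_rtrancl)
  qed (use step in auto)
qed simp

lemma rtrancl_exits_set:
  assumes "(a, b) \<in> R\<^sup>*" "a \<in> S" "b \<notin> S"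
  shows "\<exists>u w. (u, w) \<in> R \<and> u \<in> S \<and> w \<notin> S"
  using assms by (induction rule: rtrancl_induct) auto

lemma stable_treeD:
  assumes "stable_tree n G"
  shows "finite (IV G)" "IV G \<noteq> {}" "IE G \<subseteq> IV G \<times> IV G" "sym (IE G)" "irrefl (IE G)"
    "\<And>x y. x \<in> IV G \<Longrightarrow> y \<in> IV G \<Longrightarrow> (x, y) \<in> (IE G)\<^sup>*"
    "\<And>x y. (x, y) \<in> IE G \<Longrightarrow> (x, y) \<notin> (IE G - {(x, y), (y, x)})\<^sup>*"
    "\<And>i. i \<in> {1..n} \<Longrightarrow> att G i \<in> IV G"
    "\<And>v. v \<in> IV G \<Longrightarrow> 3 \<le> vdeg n G v"
  using assms unfolding stable_tree_def is_tree_graph_def by auto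

lemma stable_tree_edge_IV: "stable_tree n G \<Longrightarrow> (x, y) \<in> IE G \<Longrightarrow> x \<in> IV G \<and> y \<in> IV G"
  using stable_treeD(3) by blast

lemma stable_tree_edge_sym: "stable_tree n G \<Longrightarrow> (x, y) \<in> IE G \<Longrightarrow> (y, x) \<in> IE G"
  using stable_treeD(4) by (auto dest: symD)

lemma stable_tree_edge_neq: "stable_tree n G \<Longrightarrow> (x, y) \<in> IE G \<Longrightarrow> x \<noteq> y"
  using stable_treeD(5) by (auto simp: irrefl_def)

lemma side_self: "x \<in> side G x y"
  by (simp add: side_def)

lemma side_subset_IV:
  assumes "stable_tree n G" "x \<in> IV G"
  shows "side G x y \<subseteq> IV G"
proof
  fix z assume "z \<in> side G x y"
  then have "(x, z) \<in> (IE G - {(x, y), (y, x)})\<^sup>*" by (simp add: side_def)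
  then show "z \<in> IV G"
    by (induction rule: rtrancl_induct) (use assms stable_tree_edge_IV in auto)
qed

lemma finite_side: "stable_tree n G \<Longrightarrow> (x, y) \<in> IE G \<Longrightarrow> finite (side G x y)"
  by (meson finite_subset side_subset_IV stable_treeD(1) stable_tree_edge_IV)

lemma side_other_end: "stable_tree n G \<Longrightarrow> (x, y) \<in> IE G \<Longrightarrow> y \<notin> side G x y"
  using stable_treeD(7) by (auto simp: side_def)

lemma side_closed:
  "z \<in> side G x y \<Longrightarrow> (z, w) \<in> IE G \<Longrightarrow> (z, w) \<notin> {(x, y), (y, x)} \<Longrightarrow> w \<in> side G x y"
  unfolding side_def by (auto intro: rtrancl_into_rtrancl)

lemma side_closed_rtrancl:
  assumes "p \<in> side G x y" "(p, q) \<in> R\<^sup>*" "R \<subseteq> IE G - {(x, y), (y, x)}"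
  shows "q \<in> side G x y"
  using assms(2,1) by (induction rule: rtrancl_induct) (use assms(3) side_closed in blast)+

lemma side_Un:
  assumes st: "stable_tree n G" and e: "(x, y) \<in> IE G"
  shows "side G x y \<union> side G y x = IV G"
proof
  show "side G x y \<union> side G y x \<subseteq> IV G"
    using side_subset_IV stable_tree_edge_IV assms by blast
  show "IV G \<subseteq> side G x y \<union> side G y x"
  proof
    fix z assume "z \<in> IV G"
    then have "(x, z) \<in> (IE G)\<^sup>*" using stable_treeD(6) stable_tree_edge_IV assms by blast
    then show "z \<in> side G x y \<union> side G y x"
    proof (induction rule: rtrancl_induct)
      case (step w w')
      then show ?case
        using side_self[of x G y] side_self[of y G x] side_closed[of w G x y w'] side_closed[of w G y x w']
        by auto
    qed (simp add: side_self)
  qed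
qed

lemma side_disjoint:
  assumes st: "stable_tree n G" and e: "(x, y) \<in> IE G"
  shows "side G x y \<inter> side G y x = {}"
proof (rule ccontr)
  let ?R = "IE G - {(x, y), (y, x)}"
  assume "side G x y \<inter> side G y x \<noteq> {}"
  then obtain z where "(x, z) \<in> ?R\<^sup>*" "(y, z) \<in> ?R\<^sup>*"
    by (auto simp: side_def insert_commute)
  moreover have "sym (?R\<^sup>*)"
    using stable_treeD(4)[OF st] by (intro sym_rtrancl) (auto simp: sym_def)
  ultimately have "(x, y) \<in> ?R\<^sup>*" by (meson rtrancl_trans symD)
  then show False using side_other_end[OF assms] by (simp add: side_def)
qed

lemma side_connected:
  assumes st: "stable_tree n G" and "p \<in> side G x y" "q \<in> side G x y"
  shows "(p, q) \<in> (IE G \<inter> side G x y \<times> side G x y)\<^sup>*"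
proof -
  let ?E = "IE G \<inter> side G x y \<times> side G x y"
  have from_x: "(x, z) \<in> ?E\<^sup>*" if "z \<in> side G x y" for z
  proof -
    have "(x, z) \<in> (IE G - {(x, y), (y, x)})\<^sup>*" using that by (simp add: side_def)
    then show ?thesis
    proof (induction rule: rtrancl_induct)
      case (step w w')
      then have "w \<in> side G x y" "w' \<in> side G x y"
        by (auto simp: side_def intro: rtrancl_into_rtrancl)
      with step show ?case by (auto intro: rtrancl_into_rtrancl)
    qed simp
  qed
  have "sym (?E\<^sup>*)"
    using stable_treeD(4)[OF st] by (intro sym_rtrancl) (auto simp: sym_def)
  then show ?thesis using from_x assms(2,3) by (meson rtrancl_trans symD)
qed

lemma side_subset_side:
  assumes "a \<notin> side G p q" "b \<notin> side G p q" "p \<in> side G a b"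
  shows "side G p q \<subseteq> side G a b"
proof
  fix z assume "z \<in> side G p q"
  then have "(p, z) \<in> (IE G - {(p, q), (q, p)})\<^sup>*" by (simp add: side_def)
  then have "(p, z) \<in> (IE G - {(p, q), (q, p)} - {(a, b), (b, a)})\<^sup>*"
  proof (induction rule: rtrancl_induct)
    case (step w w')
    then have "w \<in> side G p q" by (simp add: side_def)
    with step assms(1,2) show ?case by (auto intro: rtrancl_into_rtrancl)
  qed simp
  then show "z \<in> side G a b" using side_closed_rtrancl[OF assms(3)] by blast
qed

lemma side_neighbour_psubset:
  assumes st: "stable_tree n G" and e: "(x, y) \<in> IE G" and e': "(x, z) \<in> IE G" and "z \<noteq> y"
  shows "side G z x \<subset> side G x y"
proof -
  have x: "x \<notin> side G z x" using side_other_end[OF st stable_tree_edge_sym[OF st e']] .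
  have z: "z \<in> side G x y"
    using side_closed[OF side_self e'] \<open>z \<noteq> y\<close> stable_tree_edge_neq[OF st e] by auto
  have "side G z x \<subseteq> side G x y"
  proof
    fix w assume "w \<in> side G z x"
    then have "(z, w) \<in> (IE G - {(z, x), (x, z)})\<^sup>*" by (simp add: side_def)
    then show "w \<in> side G x y"
    proof (induction rule: rtrancl_induct)
      case (step u u')
      then have "u \<noteq> x" "u' \<noteq> x"
        using x by (auto simp: side_def intro: rtrancl_into_rtrancl)
      with step show ?case using side_closed[of u G x y u'] by auto
    qed (fact z)
  qed
  with x side_self[of x G y] show ?thesis by blast
qed

lemma finite_labels_on: "finite (labels_on n G S)"
  by (simp add: labels_on_def)

lemma labels_on_mono: "S \<subseteq> T \<Longrightarrow> labels_on n G S \<subseteq> labels_on n G T"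
  by (auto simp: labels_on_def)

lemma card_labels_on_side:
  assumes st: "stable_tree n G"
  shows "(x, y) \<in> IE G \<Longrightarrow> 2 \<le> card (labels_on n G (side G x y))"
proof (induction "card (side G x y)" arbitrary: x y rule: less_induct)
  case less
  let ?N = "{w. (x, w) \<in> IE G}"
  have deg: "3 \<le> card ?N + card (labels n G x)"
    using stable_treeD(9)[OF st] stable_tree_edge_IV[OF st less.prems] by (simp add: vdeg_def)
  show ?case
  proof (cases "\<exists>z. (x, z) \<in> IE G \<and> z \<noteq> y")
    case True
    then obtain z where z: "(x, z) \<in> IE G" "z \<noteq> y" by blast
    have sub: "side G z x \<subset> side G x y" using side_neighbour_psubset[OF st less.prems z] .
    then have "2 \<le> card (labels_on n G (side G z x))"
      using less.hyps[of z x] stable_tree_edge_sym[OF st z(1)] finite_side[OF st less.prems]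
        psubset_card_mono by blast
    moreover have "labels_on n G (side G z x) \<subseteq> labels_on n G (side G x y)"
      using sub labels_on_mono by blast
    ultimately show ?thesis by (meson card_mono finite_labels_on le_trans)
  next
    case False
    then have "card ?N \<le> 1" using card_mono[of "{y}" ?N] by auto
    moreover have "labels n G x \<subseteq> labels_on n G (side G x y)"
      using side_self by (auto simp: labels_def labels_on_def)
    then have "card (labels n G x) \<le> card (labels_on n G (side G x y))"
      by (simp add: card_mono finite_labels_on)
    ultimately show ?thesis using deg by linarith
  qed
qed

lemma labels_on_sides_Un:
  assumes "stable_tree n G" "(x, y) \<in> IE G"
  shows "labels_on n G (side G x y) \<union> labels_on n G (side G y x) = {1..n}"
  using side_Un[OF assms] stable_treeD(8)[OF assms(1)] by (auto simp: labels_on_def)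

lemma contractsD:
  assumes "contracts n G G' \<pi>"
  shows "stable_tree n G" "stable_tree n G'" "\<pi> ` IV G = IV G'"
    "\<And>i. i \<in> {1..n} \<Longrightarrow> att G' i = \<pi> (att G i)"
    "\<And>a b. (a, b) \<in> IE G' \<longleftrightarrow> a \<noteq> b \<and> (\<exists>v w. (v, w) \<in> IE G \<and> \<pi> v = a \<and> \<pi> w = b)"
    "\<And>v' x y. v' \<in> IV G' \<Longrightarrow> x \<in> IV G \<Longrightarrow> y \<in> IV G \<Longrightarrow> \<pi> x = v' \<Longrightarrow> \<pi> y = v' \<Longrightarrow>
        (x, y) \<in> (IE G \<inter> {(a, b). \<pi> a = v' \<and> \<pi> b = v'})\<^sup>*"
proof -
  note c = assms[unfolded contracts_def]
  show "stable_tree n G" using c by (elim conjE)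
  show "stable_tree n G'" using c by (elim conjE)
  show "\<pi> ` IV G = IV G'" using c by (elim conjE)
  show "\<And>i. i \<in> {1..n} \<Longrightarrow> att G' i = \<pi> (att G i)" using c by (elim conjE) blast
  show "\<And>a b. (a, b) \<in> IE G' \<longleftrightarrow> a \<noteq> b \<and> (\<exists>v w. (v, w) \<in> IE G \<and> \<pi> v = a \<and> \<pi> w = b)"
    using c by (elim conjE) (rule spec2)
  show "\<And>v' x y. v' \<in> IV G' \<Longrightarrow> x \<in> IV G \<Longrightarrow> y \<in> IV G \<Longrightarrow> \<pi> x = v' \<Longrightarrow> \<pi> y = v' \<Longrightarrow>
        (x, y) \<in> (IE G \<inter> {(a, b). \<pi> a = v' \<and> \<pi> b = v'})\<^sup>*"
    using c by (elim conjE) blast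
qed

lemma contracts_id: "stable_tree n G \<Longrightarrow> contracts n G G id"
  unfolding contracts_def by (auto dest: stable_tree_edge_neq)

lemma contracts_fibre_rtrancl:
  assumes c: "contracts n G G' \<pi>" and "x \<in> IV G" "z \<in> IV G" "\<pi> z = \<pi> x"
  shows "(x, z) \<in> (IE G \<inter> {(a, b). f (\<pi> a) = f (\<pi> x) \<and> f (\<pi> b) = f (\<pi> x)})\<^sup>*"
proof -
  have "(x, z) \<in> (IE G \<inter> {(a, b). \<pi> a = \<pi> x \<and> \<pi> b = \<pi> x})\<^sup>*"
    using contractsD(6)[OF c] contractsD(3)[OF c] assms(2-4) by blast
  then show ?thesis by (rule rtrancl_mono[THEN subsetD, rotated]) auto
qed

text \<open>Fibres of a contraction are connected, so paths in \<open>G'\<close> lift to paths in \<open>G\<close>.\<close>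

lemma contracts_lift_rtrancl:
  assumes c: "contracts n G G' \<pi>" and x: "x \<in> IV G"
    and path: "(\<pi> x, y') \<in> (IE G' \<inter> {(a, b). f a = h \<and> f b = h})\<^sup>*" and h: "f (\<pi> x) = h"
  shows "\<forall>z\<in>IV G. \<pi> z = y' \<longrightarrow> (x, z) \<in> (IE G \<inter> {(a, b). f (\<pi> a) = h \<and> f (\<pi> b) = h})\<^sup>*"
  using path
proof (induction rule: rtrancl_induct)
  case base
  then show ?case using contracts_fibre_rtrancl[OF c x, of _ f] h by simp
next
  case (step u' y')
  let ?R = "IE G \<inter> {(a, b). f (\<pi> a) = h \<and> f (\<pi> b) = h}"
  show ?case
  proof (intro ballI impI)
    fix z assume z: "z \<in> IV G" "\<pi> z = y'"
    obtain p q where pq: "(p, q) \<in> IE G" "\<pi> p = u'" "\<pi> q = y'"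
      using step(2) contractsD(5)[OF c] by blast
    have pq_IV: "p \<in> IV G" "q \<in> IV G" using stable_tree_edge_IV[OF contractsD(1)[OF c] pq(1)] by auto
    have "(x, p) \<in> ?R\<^sup>*" using step(3) pq_IV pq by blast
    moreover have "(p, q) \<in> ?R" using pq step(2) by auto
    moreover have "(q, z) \<in> ?R\<^sup>*"
      using contracts_fibre_rtrancl[OF c pq_IV(2) z(1), of f] z pq step(2) by simp
    ultimately show "(x, z) \<in> ?R\<^sup>*" by (meson rtrancl_into_rtrancl rtrancl_trans)
  qed
qed

lemma contracts_comp:
  assumes c: "contracts n G G' \<pi>" and d: "contracts n G' H \<psi>"
  shows "contracts n G H (\<psi> \<circ> \<pi>)"
  unfolding contracts_def
proof (intro conjI allI ballI impI)
  show "stable_tree n G" "stable_tree n H" using contractsD(1)[OF c] contractsD(2)[OF d] .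
  show "(\<psi> \<circ> \<pi>) ` IV G = IV H" using contractsD(3)[OF c] contractsD(3)[OF d] by (metis image_comp)
  show "att H i = (\<psi> \<circ> \<pi>) (att G i)" if "i \<in> {1..n}" for i
    using contractsD(4)[OF c that] contractsD(4)[OF d that] by simp
  show "(a, b) \<in> IE H \<longleftrightarrow> a \<noteq> b \<and> (\<exists>v w. (v, w) \<in> IE G \<and> (\<psi> \<circ> \<pi>) v = a \<and> (\<psi> \<circ> \<pi>) w = b)"
    for a b
  proof
    assume "(a, b) \<in> IE H"
    then obtain v' w' where "a \<noteq> b" "(v', w') \<in> IE G'" "\<psi> v' = a" "\<psi> w' = b"
      using contractsD(5)[OF d] by blast
    moreover obtain v w where "(v, w) \<in> IE G" "\<pi> v = v'" "\<pi> w = w'"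
      using contractsD(5)[OF c] \<open>(v', w') \<in> IE G'\<close> by blast
    ultimately show "a \<noteq> b \<and> (\<exists>v w. (v, w) \<in> IE G \<and> (\<psi> \<circ> \<pi>) v = a \<and> (\<psi> \<circ> \<pi>) w = b)"
      by auto
  next
    assume "a \<noteq> b \<and> (\<exists>v w. (v, w) \<in> IE G \<and> (\<psi> \<circ> \<pi>) v = a \<and> (\<psi> \<circ> \<pi>) w = b)"
    then obtain v w where vw: "a \<noteq> b" "(v, w) \<in> IE G" "\<psi> (\<pi> v) = a" "\<psi> (\<pi> w) = b" by auto
    then have "(\<pi> v, \<pi> w) \<in> IE G'" using contractsD(5)[OF c] by auto
    then show "(a, b) \<in> IE H" using contractsD(5)[OF d] vw by blast
  qed
next
  fix h x y assume h: "h \<in> IV H" and x: "x \<in> IV G" and y: "y \<in> IV G"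
    and hx: "(\<psi> \<circ> \<pi>) x = h" and hy: "(\<psi> \<circ> \<pi>) y = h"
  have "\<pi> x \<in> IV G'" "\<pi> y \<in> IV G'" using x y contractsD(3)[OF c] by auto
  then have "(\<pi> x, \<pi> y) \<in> (IE G' \<inter> {(a, b). \<psi> a = h \<and> \<psi> b = h})\<^sup>*"
    using contractsD(6)[OF d h] hx hy by simp
  then show "(x, y) \<in> (IE G \<inter> {(a, b). (\<psi> \<circ> \<pi>) a = h \<and> (\<psi> \<circ> \<pi>) b = h})\<^sup>*"
    using contracts_lift_rtrancl[OF c x, where f = \<psi> and h = h] hx y by simp
qed

lemma contracts_fibre_in_side:
  assumes c: "contracts n G G' \<pi>" and e: "(x, y) \<in> IE G" and ne: "\<pi> x \<noteq> \<pi> y"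
    and p: "p \<in> side G x y" and q: "q \<in> IV G" "\<pi> q = \<pi> p"
  shows "q \<in> side G x y"
proof -
  have st: "stable_tree n G" using contractsD(1)[OF c] .
  have "p \<in> IV G" using side_subset_IV[OF st] stable_tree_edge_IV[OF st e] p by blast
  then have "(p, q) \<in> (IE G \<inter> {(a, b). \<pi> a = \<pi> p \<and> \<pi> b = \<pi> p})\<^sup>*"
    using contracts_fibre_rtrancl[OF c _ q, where f = id] by simp
  moreover have "IE G \<inter> {(a, b). \<pi> a = \<pi> p \<and> \<pi> b = \<pi> p} \<subseteq> IE G - {(x, y), (y, x)}"
    using ne by auto
  ultimately show ?thesis using side_closed_rtrancl[OF p] by blast
qed

lemma contracts_image_rtrancl:
  assumes c: "contracts n G G' \<pi>" and path: "(p, q) \<in> (IE G \<inter> A \<times> A)\<^sup>*"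
    and A: "\<And>a. a \<in> A \<Longrightarrow> f (\<pi> a) = h"
  shows "(\<pi> p, \<pi> q) \<in> (IE G' \<inter> {(a, b). f a = h \<and> f b = h})\<^sup>*"
  using path
proof (induction rule: rtrancl_induct)
  case (step w w')
  show ?case
  proof (cases "\<pi> w = \<pi> w'")
    case False
    then have "(\<pi> w, \<pi> w') \<in> IE G'" using contractsD(5)[OF c] step(2) by blast
    with A step show ?thesis by (auto intro: rtrancl_into_rtrancl)
  qed (use step in simp)
qed simp

lemma contracts_two_sides_fibres:
  assumes c: "contracts n G G' \<pi>" and e: "(x, y) \<in> IE G"
    and on_side: "\<And>a. a \<in> side G x y \<Longrightarrow> \<rho> (\<pi> a) = (0::nat)"
    and off_side: "\<And>a. a \<in> side G y x \<Longrightarrow> \<rho> (\<pi> a) = 1"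
    and uw: "u \<in> IV G'" "w \<in> IV G'" and h: "\<rho> u = h" "\<rho> w = h"
  shows "(u, w) \<in> (IE G' \<inter> {(a, b). \<rho> a = h \<and> \<rho> b = h})\<^sup>*"
proof -
  have st: "stable_tree n G" using contractsD(1)[OF c] .
  obtain p q where pq: "p \<in> IV G" "q \<in> IV G" "u = \<pi> p" "w = \<pi> q"
    using uw contractsD(3)[OF c] by blast
  have "p \<in> side G x y \<and> q \<in> side G x y \<and> h = 0 \<or> p \<in> side G y x \<and> q \<in> side G y x \<and> h = 1"
    using on_side off_side pq h side_Un[OF st e] by (metis Un_iff zero_neq_one)
  then show ?thesis
  proof (elim disjE conjE)
    assume sides: "p \<in> side G x y" "q \<in> side G x y" "h = 0"
    then show ?thesis
      using contracts_image_rtrancl[where f = \<rho> and h = 0, OF c side_connected[OF st sides(1,2)] on_side]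
        pq by simp
  next
    assume sides: "p \<in> side G y x" "q \<in> side G y x" "h = 1"
    then show ?thesis
      using contracts_image_rtrancl[where f = \<rho> and h = 1, OF c side_connected[OF st sides(1,2)] off_side]
        pq by simp
  qed
qed

definition edge_tree :: "stree \<Rightarrow> nat set \<Rightarrow> stree" where
  "edge_tree G S =
     \<lparr>IV = {0, 1}, IE = {(0, 1), (1, 0)}, att = (\<lambda>i. if att G i \<in> S then 0 else 1)\<rparr>"

lemma labels_edge_tree_0: "labels n (edge_tree G S) 0 = labels_on n G S"
  by (auto simp: labels_def labels_on_def edge_tree_def)

lemma labels_edge_tree_side_1:
  assumes "stable_tree n G" "(x, y) \<in> IE G"
  shows "labels n (edge_tree G (side G x y)) 1 = labels_on n G (side G y x)"
  using side_Un[OF assms] side_disjoint[OF assms] stable_treeD(8)[OF assms(1)]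
  by (auto simp: labels_def labels_on_def edge_tree_def)

lemma S2_edge_tree_side:
  assumes st: "stable_tree n G" and e: "(x, y) \<in> IE G"
  shows "S2 n (edge_tree G (side G x y))"
proof -
  let ?H = "edge_tree G (side G x y)"
  have "is_tree_graph {0::nat, 1} {(0, 1), (1, 0)}"
    unfolding is_tree_graph_def by (auto simp: sym_def irrefl_def)
  moreover have "3 \<le> vdeg n ?H v" if "v \<in> IV ?H" for v
  proof -
    have "{w. (0, w) \<in> IE ?H} = {1}" "{w. (1, w) \<in> IE ?H} = {0}"
      by (auto simp: edge_tree_def)
    moreover have "v = 0 \<or> v = 1" using that by (simp add: edge_tree_def)
    ultimately show ?thesis
      using card_labels_on_side[OF st e] card_labels_on_side[OF st stable_tree_edge_sym[OF st e]]
        labels_edge_tree_0 labels_edge_tree_side_1[OF st e]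
      by (auto simp: vdeg_def)
  qed
  ultimately show ?thesis by (auto simp: S2_def stable_tree_def edge_tree_def)
qed

lemma contracts_side_saturated:
  assumes c: "contracts n G G' \<pi>" and e: "(x, y) \<in> IE G" and ne: "\<pi> x \<noteq> \<pi> y" and z: "z \<in> IV G"
  shows "\<pi> z \<in> \<pi> ` side G x y \<longleftrightarrow> z \<in> side G x y"
  using contracts_fibre_in_side[OF c e ne _ z] by auto

lemma contracts_onto_edge_tree:
  assumes c: "contracts n G G' \<pi>" and e: "(x, y) \<in> IE G" and ne: "\<pi> x \<noteq> \<pi> y"
  shows "contracts n G' (edge_tree G (side G x y)) (\<lambda>v'. if v' \<in> \<pi> ` side G x y then 0 else 1)"
    (is "contracts n G' ?H ?\<rho>")
proof -
  have st: "stable_tree n G" using contractsD(1)[OF c] .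
  have \<rho>: "?\<rho> (\<pi> z) = (if z \<in> side G x y then 0 else 1)" if "z \<in> IV G" for z
    using contracts_side_saturated[OF c e ne that] by simp
  have x: "x \<in> side G x y" and y: "y \<in> IV G" "y \<notin> side G x y"
    using side_self stable_tree_edge_IV[OF st e] side_other_end[OF st e] by auto
  have "x \<in> IV G" using stable_tree_edge_IV[OF st e] by blast
  have "(\<pi> x, \<pi> y) \<in> IE G'" "(\<pi> y, \<pi> x) \<in> IE G'"
    using contractsD(5)[OF c] e stable_tree_edge_sym[OF st e] ne by metis+
  moreover have "?\<rho> (\<pi> x) = 0" "?\<rho> (\<pi> y) = 1"
    using \<rho>[OF \<open>x \<in> IV G\<close>] \<rho>[OF y(1)] x y(2) by auto
  moreover have "\<pi> x \<in> IV G'" "\<pi> y \<in> IV G'"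
    using contractsD(3)[OF c] \<open>x \<in> IV G\<close> y(1) by auto
  ultimately have edges: "(a, b) \<in> IE ?H \<longleftrightarrow> a \<noteq> b \<and> (\<exists>v w. (v, w) \<in> IE G' \<and> ?\<rho> v = a \<and> ?\<rho> w = b)"
    and image: "?\<rho> ` IV G' = IV ?H" for a b
    by (auto simp: edge_tree_def image_iff split: if_splits)
  have on_side: "?\<rho> (\<pi> a) = 0" if "a \<in> side G x y" for a
    using that by simp
  have off_side: "?\<rho> (\<pi> a) = 1" if "a \<in> side G y x" for a
  proof -
    have "a \<in> IV G" "a \<notin> side G x y"
      using that side_subset_IV[OF st y(1)] side_disjoint[OF st e] by auto
    then show ?thesis using \<rho> by simp
  qed
  show ?thesis
    unfolding contracts_def
  proof (intro conjI allI ballI impI)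
    show "stable_tree n G'" using contractsD(2)[OF c] .
    show "stable_tree n ?H" using S2_edge_tree_side[OF st e] by (simp add: S2_def)
    show "?\<rho> ` IV G' = IV ?H" by (fact image)
    show "att ?H i = ?\<rho> (att G' i)" if "i \<in> {1..n}" for i
      using contractsD(4)[OF c that] \<rho>[OF stable_treeD(8)[OF st that]] by (simp add: edge_tree_def)
    show "(a, b) \<in> IE ?H \<longleftrightarrow> a \<noteq> b \<and> (\<exists>v w. (v, w) \<in> IE G' \<and> ?\<rho> v = a \<and> ?\<rho> w = b)" for a b
      by (fact edges)
  qed (rule contracts_two_sides_fibres[where \<rho> = ?\<rho>, OF c e on_side off_side], assumption+)
qed

lemma S2_fibre_side:
  assumes c: "contracts n G H \<psi>" and H: "S2 n H" and w: "w \<in> IV H"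
  shows "\<exists>(p, q) \<in> IE G. \<forall>z \<in> IV G. \<psi> z = w \<longleftrightarrow> z \<in> side G p q"
proof -
  have st: "stable_tree n G" and stH: "stable_tree n H" using contractsD(1,2)[OF c] .
  obtain w' where w': "IV H = {w, w'}" "w \<noteq> w'"
    using H w by (auto simp: S2_def card_2_iff) (metis insert_commute)
  have "(w, w') \<in> (IE H)\<^sup>*" using stable_treeD(6)[OF stH] w' by auto
  then obtain u where "(w, u) \<in> IE H" using w'(2) by (metis converse_rtranclE)
  moreover have "u \<in> IV H" "u \<noteq> w"
    using stable_tree_edge_IV[OF stH] stable_tree_edge_neq[OF stH] calculation by auto
  ultimately have "(w, w') \<in> IE H" using w' by auto
  then obtain p q where pq: "(p, q) \<in> IE G" "\<psi> p = w" "\<psi> q = w'"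
    using contractsD(5)[OF c] by blast
  have ne: "\<psi> p \<noteq> \<psi> q" using pq w' by simp
  have "\<psi> z = w \<longleftrightarrow> z \<in> side G p q" if z: "z \<in> IV G" for z
  proof
    assume "\<psi> z = w"
    then show "z \<in> side G p q" using contracts_fibre_in_side[OF c pq(1) ne side_self z] pq by simp
  next
    assume z_side: "z \<in> side G p q"
    have "\<psi> z \<noteq> w'"
    proof
      assume "\<psi> z = w'"
      then have "z \<in> side G q p"
        using contracts_fibre_in_side[OF c stable_tree_edge_sym[OF st pq(1)] _ side_self z] pq ne by simp
      then show False using z_side side_disjoint[OF st pq(1)] by auto
    qed
    moreover have "\<psi> z \<in> IV H" using z contractsD(3)[OF c] by blast
    ultimately show "\<psi> z = w" using w' by auto
  qed
  with pq(1) show ?thesis by blast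
qed

definition C_edges :: "nat \<Rightarrow> nat set set \<Rightarrow> stree \<Rightarrow> (nat \<times> nat) set" where
  "C_edges n C G = {(x, y) \<in> IE G. labels_on n G (side G x y) \<in> C}"

lemma Z_of_iff_C_side:
  assumes st: "stable_tree n G"
  shows "v \<in> Z_of n C G \<longleftrightarrow> (\<exists>(x, y) \<in> C_edges n C G. v \<in> side G x y)"
proof
  assume "v \<in> Z_of n C G"
  then obtain H \<psi> w where v: "v \<in> IV G" and H: "S2 n H" "w \<in> IV H" "labels n H w \<in> C"
    "contracts n G H \<psi>" "\<psi> v = w"
    unfolding Z_of_def by blast
  obtain p q where pq: "(p, q) \<in> IE G" and fibre: "\<And>z. z \<in> IV G \<Longrightarrow> \<psi> z = w \<longleftrightarrow> z \<in> side G p q"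
    using S2_fibre_side[OF H(4,1,2)] by blast
  have "att H i = w \<longleftrightarrow> att G i \<in> side G p q" if "i \<in> {1..n}" for i
    using contractsD(4)[OF H(4) that] fibre[OF stable_treeD(8)[OF st that]] by simp
  then have "labels n H w = labels_on n G (side G p q)"
    unfolding labels_def labels_on_def by blast
  then show "\<exists>(x, y) \<in> C_edges n C G. v \<in> side G x y"
    using pq H(3,5) fibre[OF v] by (auto simp: C_edges_def)
next
  assume "\<exists>(x, y) \<in> C_edges n C G. v \<in> side G x y"
  then obtain x y where e: "(x, y) \<in> IE G" and C: "labels_on n G (side G x y) \<in> C"
    and v: "v \<in> side G x y"
    by (auto simp: C_edges_def)
  let ?H = "edge_tree G (side G x y)"
  have "contracts n G ?H (\<lambda>v'. if v' \<in> side G x y then 0 else 1)"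
    using contracts_onto_edge_tree[OF contracts_id[OF st] e] stable_tree_edge_neq[OF st e] by simp
  moreover have "v \<in> IV G" using side_subset_IV[OF st] stable_tree_edge_IV[OF st e] v by blast
  moreover have "S2 n ?H" "0 \<in> IV ?H" "labels n ?H 0 \<in> C"
    using S2_edge_tree_side[OF st e] labels_edge_tree_0 C by (auto simp: edge_tree_def)
  moreover have "(\<lambda>v'. if v' \<in> side G x y then 0 else 1) v = (0::nat)" using v by simp
  ultimately show "v \<in> Z_of n C G"
    unfolding Z_of_def by blast
qed

lemma contraction_indicatorD:
  assumes "contraction_indicator n C"
  shows "B1 \<in> C \<Longrightarrow> B2 \<in> C \<Longrightarrow> B1 \<union> B2 \<noteq> {1..n}"
    and "B \<in> C \<Longrightarrow> B' \<subseteq> B \<Longrightarrow> 2 \<le> card B' \<Longrightarrow> B' \<in> C"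
  using assms unfolding contraction_indicator_def by blast+

lemma labels_on_subset: "labels_on n G S \<subseteq> {1..n}"
  by (auto simp: labels_on_def)

text \<open>Axiom (3) rules out every relative position of the two edges except nesting.\<close>

lemma C_side_psubset:
  assumes ci: "contraction_indicator n C" and st: "stable_tree n G"
    and xy: "(x, y) \<in> C_edges n C G" and ab: "(a, b) \<in> C_edges n C G" and y: "y \<in> side G a b"
  shows "side G x y \<subset> side G a b"
proof -
  have e: "(x, y) \<in> IE G" and C_xy: "labels_on n G (side G x y) \<in> C"
    and e': "(a, b) \<in> IE G" and C_ab: "labels_on n G (side G a b) \<in> C"
    using xy ab by (auto simp: C_edges_def)
  have Un: "labels_on n G (side G x y) \<union> labels_on n G (side G y x) = {1..n}"
    using labels_on_sides_Un[OF st e] .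
  have "(a, b) \<noteq> (x, y)" using y side_other_end[OF st e] by auto
  moreover have "(a, b) \<noteq> (y, x)" using contraction_indicatorD(1)[OF ci C_xy C_ab] Un by auto
  ultimately have not_xy: "(a, b) \<notin> {(x, y), (y, x)}" by blast
  have "a \<notin> side G x y"
  proof
    assume a: "a \<in> side G x y"
    then have "b \<in> side G x y" using side_closed[OF a e'] not_xy by blast
    with a have "side G y x \<subseteq> side G a b"
      using side_subset_side[OF _ _ y] side_disjoint[OF st e] by blast
    then have "labels_on n G (side G y x) \<subseteq> labels_on n G (side G a b)"
      by (rule labels_on_mono)
    then have "labels_on n G (side G x y) \<union> labels_on n G (side G a b) = {1..n}"
      using Un labels_on_subset[of n G "side G a b"] by blast
    then show False using contraction_indicatorD(1)[OF ci C_xy C_ab] by blast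
  qed
  then have a: "a \<in> side G y x" using side_Un[OF st e] stable_tree_edge_IV[OF st e'] by blast
  then have "b \<in> side G y x" using side_closed[OF a e'] not_xy by blast
  with a have ab_out: "a \<notin> side G x y" "b \<notin> side G x y" using side_disjoint[OF st e] by blast+
  have "x \<in> side G a b"
    using side_closed[OF y stable_tree_edge_sym[OF st e]] not_xy by blast
  then have "side G x y \<subseteq> side G a b" using side_subset_side[OF ab_out] by blast
  with y side_other_end[OF st e] show ?thesis by blast
qed

lemma connected_set_in_C_side:
  assumes ci: "contraction_indicator n C" and st: "stable_tree n G" and f0: "f0 \<in> F"
    and conn: "\<And>p q. p \<in> F \<Longrightarrow> q \<in> F \<Longrightarrow> (p, q) \<in> (IE G \<inter> F \<times> F)\<^sup>*"
    and cover: "\<And>f. f \<in> F \<Longrightarrow> \<exists>(x, y) \<in> C_edges n C G. f \<in> side G x y"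
  shows "\<exists>(x, y) \<in> C_edges n C G. F \<subseteq> side G x y"
proof -
  define P where "P q \<longleftrightarrow> q \<in> C_edges n C G \<and> side G (fst q) (snd q) \<inter> F \<noteq> {}" for q
  define m where "m q = card (side G (fst q) (snd q))" for q
  obtain x0 y0 where "(x0, y0) \<in> C_edges n C G" "f0 \<in> side G x0 y0" using cover[OF f0] by auto
  then have "P (x0, y0)" using f0 by (auto simp: P_def)
  moreover have "m q < Suc (card (IV G))" if "P q" for q
  proof -
    have "fst q \<in> IV G" using that stable_tree_edge_IV[OF st] by (auto simp: P_def C_edges_def)
    then show ?thesis
      using side_subset_IV[OF st] stable_treeD(1)[OF st] by (simp add: m_def card_mono le_imp_less_Suc)
  qed
  ultimately obtain q where "P q" "\<And>q'. P q' \<Longrightarrow> m q' \<le> m q"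
    using Lattices_Big.ex_has_greatest_nat[of P "(x0, y0)" m] by blast
  then obtain x y where P: "(x, y) \<in> C_edges n C G" "side G x y \<inter> F \<noteq> {}"
    and max: "\<And>a b. (a, b) \<in> C_edges n C G \<Longrightarrow> side G a b \<inter> F \<noteq> {} \<Longrightarrow> card (side G a b) \<le> card (side G x y)"
    unfolding P_def m_def by (metis fst_conv prod.collapse snd_conv)
  show ?thesis
  proof (rule ccontr)
    assume "\<not> ?thesis"
    then obtain f where f: "f \<in> F" "f \<notin> side G x y" using P by blast
    obtain g where g: "g \<in> F" "g \<in> side G x y" using P by blast
    obtain u w where uw: "(u, w) \<in> IE G \<inter> F \<times> F" "u \<in> side G x y" "w \<notin> side G x y"
      using rtrancl_exits_set[OF conn[OF g(1) f(1)] g(2) f(2)] by blast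
    have e: "(x, y) \<in> IE G" using P(1) by (simp add: C_edges_def)
    have "(u, w) \<in> {(x, y), (y, x)}" using side_closed[OF uw(2)] uw(1,3) by blast
    moreover have "u \<noteq> y" using uw(2) side_other_end[OF st e] by blast
    ultimately have "y \<in> F" using uw(1) by blast
    then obtain a b where ab: "(a, b) \<in> C_edges n C G" "y \<in> side G a b" using cover by blast
    then have "side G x y \<subset> side G a b" using C_side_psubset[OF ci st P(1)] by blast
    then have "card (side G x y) < card (side G a b)"
      using ab(1) finite_side[OF st] by (auto simp: C_edges_def intro: psubset_card_mono)
    moreover have "side G a b \<inter> F \<noteq> {}" using ab \<open>y \<in> F\<close> by blast
    ultimately show False using max[OF ab(1)] by linarith
  qed
qed

text \<open>Otherwise the side behind the neighbour of \<open>x\<close> towards \<open>F\<close> would be a smaller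
  \<open>\<C>\<close>-side (by axiom (2)) still containing \<open>F\<close>.\<close>

lemma minimal_C_side_root:
  assumes ci: "contraction_indicator n C" and st: "stable_tree n G" and f0: "f0 \<in> F"
    and conn: "\<And>p q. p \<in> F \<Longrightarrow> q \<in> F \<Longrightarrow> (p, q) \<in> (IE G \<inter> F \<times> F)\<^sup>*"
    and xy: "(x, y) \<in> C_edges n C G" and F: "F \<subseteq> side G x y"
    and min: "\<And>a b. (a, b) \<in> C_edges n C G \<Longrightarrow> F \<subseteq> side G a b \<Longrightarrow> card (side G x y) \<le> card (side G a b)"
  shows "x \<in> F"
proof (rule ccontr)
  assume x: "x \<notin> F"
  let ?R = "IE G - {(x, y), (y, x)}"
  have e: "(x, y) \<in> IE G" and C_xy: "labels_on n G (side G x y) \<in> C" using xy by (auto simp: C_edges_def)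
  have "(x, f0) \<in> ?R\<^sup>*" using F f0 by (auto simp: side_def)
  moreover have "f0 \<noteq> x" using f0 x by blast
  ultimately obtain z where "(x, z) \<in> ?R" and path: "(z, f0) \<in> (?R \<inter> {(u, w). u \<noteq> x \<and> w \<noteq> x})\<^sup>*"
    by (blast dest: rtrancl_first_step_avoiding)
  then have ez: "(x, z) \<in> IE G" "z \<noteq> y" by auto
  have "f0 \<in> side G z x" using side_closed_rtrancl[OF side_self path] by blast
  moreover have "IE G \<inter> F \<times> F \<subseteq> IE G - {(z, x), (x, z)}" using x by blast
  ultimately have F_zx: "F \<subseteq> side G z x" using side_closed_rtrancl conn[OF f0] by blast
  have sub: "side G z x \<subset> side G x y" using side_neighbour_psubset[OF st e ez] .
  have "labels_on n G (side G z x) \<in> C"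
    using contraction_indicatorD(2)[OF ci C_xy] labels_on_mono[of "side G z x" "side G x y"] sub
      card_labels_on_side[OF st stable_tree_edge_sym[OF st ez(1)]] by blast
  then have "(z, x) \<in> C_edges n C G" using stable_tree_edge_sym[OF st ez(1)] by (simp add: C_edges_def)
  then have "card (side G x y) \<le> card (side G z x)" using min F_zx by blast
  moreover have "card (side G z x) < card (side G x y)" using sub finite_side[OF st e] psubset_card_mono by blast
  ultimately show False by linarith
qed

lemma Z_of_pushforward:
  assumes ci: "contraction_indicator n C" and c: "contracts n G G' \<pi>" and v': "v' \<in> IV G'"
    and fibre: "\<And>v. v \<in> IV G \<Longrightarrow> \<pi> v = v' \<Longrightarrow> v \<in> Z_of n C G"
  shows "v' \<in> Z_of n C G'"
proof -
  have st: "stable_tree n G" using contractsD(1)[OF c] .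
  define F where "F = {z \<in> IV G. \<pi> z = v'}"
  have "v' \<in> \<pi> ` IV G" using v' contractsD(3)[OF c] by simp
  then obtain f0 where f0: "f0 \<in> F" unfolding F_def by blast
  have conn: "(p, q) \<in> (IE G \<inter> F \<times> F)\<^sup>*" if "p \<in> F" "q \<in> F" for p q
  proof -
    have "(p, q) \<in> (IE G \<inter> {(a, b). \<pi> a = v' \<and> \<pi> b = v'})\<^sup>*"
      using contractsD(6)[OF c v'] that unfolding F_def by blast
    moreover have "IE G \<inter> {(a, b). \<pi> a = v' \<and> \<pi> b = v'} \<subseteq> IE G \<inter> F \<times> F"
      using stable_tree_edge_IV[OF st] unfolding F_def by blast
    ultimately show ?thesis using rtrancl_mono by blast
  qed
  have "\<exists>(x, y) \<in> C_edges n C G. f \<in> side G x y" if "f \<in> F" for f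
    using fibre that Z_of_iff_C_side[OF st] unfolding F_def by blast
  then obtain x0 y0 where "(x0, y0) \<in> C_edges n C G" "F \<subseteq> side G x0 y0"
    using connected_set_in_C_side[OF ci st f0 conn] by blast
  define P where "P q \<longleftrightarrow> q \<in> C_edges n C G \<and> F \<subseteq> side G (fst q) (snd q)" for q
  have "P (x0, y0)" by (simp add: P_def \<open>(x0, y0) \<in> C_edges n C G\<close> \<open>F \<subseteq> side G x0 y0\<close>)
  then obtain q where "P q" "\<And>q'. P q' \<Longrightarrow> card (side G (fst q) (snd q)) \<le> card (side G (fst q') (snd q'))"
    using ex_has_least_nat[of P "(x0, y0)" "\<lambda>q. card (side G (fst q) (snd q))"] by blast
  then obtain x y where xy: "(x, y) \<in> C_edges n C G" "F \<subseteq> side G x y"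
    and min: "\<And>a b. (a, b) \<in> C_edges n C G \<Longrightarrow> F \<subseteq> side G a b \<Longrightarrow> card (side G x y) \<le> card (side G a b)"
    unfolding P_def by (metis fst_conv prod.collapse snd_conv)
  have e: "(x, y) \<in> IE G" and C_xy: "labels_on n G (side G x y) \<in> C" using xy(1) by (auto simp: C_edges_def)
  have "x \<in> F" using minimal_C_side_root[OF ci st f0 conn xy min] .
  moreover have "y \<notin> F" using xy(2) side_other_end[OF st e] by blast
  ultimately have "\<pi> x = v'" "\<pi> y \<noteq> v'" using stable_tree_edge_IV[OF st e] unfolding F_def by auto
  let ?H = "edge_tree G (side G x y)" and ?\<rho> = "\<lambda>u. if u \<in> \<pi> ` side G x y then 0 else 1"
  have "contracts n G' ?H ?\<rho>"
    using contracts_onto_edge_tree[OF c e] \<open>\<pi> x = v'\<close> \<open>\<pi> y \<noteq> v'\<close> by simp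
  moreover have "?\<rho> v' = (0::nat)" using \<open>\<pi> x = v'\<close> side_self[of x G y] by auto
  moreover have "S2 n ?H" "0 \<in> IV ?H" "labels n ?H 0 \<in> C"
    using S2_edge_tree_side[OF st e] labels_edge_tree_0 C_xy by (auto simp: edge_tree_def)
  ultimately show ?thesis
    unfolding Z_of_def using v' by blast
qed

lemma Z_of_pullback:
  assumes c: "contracts n G G' \<pi>" and "v' \<in> Z_of n C G'" "v \<in> IV G" "\<pi> v = v'"
  shows "v \<in> Z_of n C G"
proof -
  obtain H \<psi> w where "S2 n H" "w \<in> IV H" "labels n H w \<in> C" "contracts n G' H \<psi>" "\<psi> v' = w"
    using assms(2) unfolding Z_of_def by blast
  moreover have "contracts n G H (\<psi> \<circ> \<pi>)" using contracts_comp[OF c] calculation(4) .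
  moreover have "(\<psi> \<circ> \<pi>) v = w" using assms(4) calculation(5) by simp
  ultimately show ?thesis unfolding Z_of_def using assms(3) by blast
qed

definition point_tree :: stree where
  "point_tree = \<lparr>IV = {0}, IE = {}, att = (\<lambda>i. 0)\<rparr>"

lemma stable_point_tree:
  assumes "3 \<le> n"
  shows "stable_tree n point_tree"
proof -
  have "labels n point_tree 0 = {1..n}" by (auto simp: labels_def point_tree_def)
  then have "vdeg n point_tree 0 = n" by (simp add: vdeg_def point_tree_def)
  with assms show ?thesis
    unfolding stable_tree_def is_tree_graph_def by (simp add: point_tree_def sym_def irrefl_def)
qed

lemma contracts_point_tree:
  assumes "3 \<le> n" "stable_tree n G"
  shows "contracts n G point_tree (\<lambda>_. 0)"
  using assms stable_point_tree[OF assms(1)] stable_treeD(2,6)[OF assms(2)]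
  unfolding contracts_def by (auto simp: point_tree_def)

lemma Z_of_point_tree: "Z_of n C point_tree = {}"
proof -
  have "\<not> contracts n point_tree H \<pi>" if "S2 n H" for H \<pi>
  proof
    assume "contracts n point_tree H \<pi>"
    then have "IV H = {\<pi> 0}" using contractsD(3) by (fastforce simp: point_tree_def)
    with that show False by (simp add: S2_def)
  qed
  then show ?thesis by (auto simp: Z_of_def)
qed

lemma Z_of_proper:
  assumes "3 \<le> n" "contraction_indicator n C" "stable_tree n G"
  shows "Z_of n C G \<noteq> IV G"
proof
  assume "Z_of n C G = IV G"
  then have "0 \<in> Z_of n C point_tree"
    using Z_of_pushforward[OF assms(2) contracts_point_tree[OF assms(1,3)]] by (simp add: point_tree_def)
  then show False by (simp add: Z_of_point_tree)
qed

lemma smooth_Z_of: "smooth n (Z_of n C)"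
  unfolding smooth_def
proof (intro allI impI ballI)
  fix G v assume "v \<in> Z_of n C G"
  then obtain H \<psi> w where H: "S2 n H" "w \<in> IV H" "labels n H w \<in> C" "contracts n G H \<psi>" "\<psi> v = w"
    unfolding Z_of_def by blast
  have "contracts n H H id" using contracts_id contractsD(2)[OF H(4)] by blast
  moreover have "id w = w" by simp
  ultimately have "w \<in> Z_of n C H" unfolding Z_of_def using H(1-3) by blast
  then show "\<exists>H \<pi>. S2 n H \<and> contracts n G H \<pi> \<and> \<pi> v \<in> Z_of n C H" using H(1,4,5) by blast
qed

lemma extremal_assignment_Z_of:
  assumes "3 \<le> n" "contraction_indicator n C"
  shows "extremal_assignment n (Z_of n C)"
  unfolding extremal_assignment_def
proof (intro conjI allI impI ballI)
  fix G assume "stable_tree n G"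
  then show "Z_of n C G \<subseteq> IV G" "Z_of n C G \<noteq> IV G"
    using Z_of_proper[OF assms] by (auto simp: Z_of_def)
next
  fix G G' \<pi> v' assume "contracts n G G' \<pi>" "v' \<in> IV G'"
  then show "v' \<in> Z_of n C G' \<longleftrightarrow> (\<forall>v\<in>IV G. \<pi> v = v' \<longrightarrow> v \<in> Z_of n C G)"
    using Z_of_pullback Z_of_pushforward[OF assms(2)] by blast
qed

theorem proposition7p7:
  fixes n :: nat and C :: "nat set set"
  assumes "3 \<le> n"
    and "contraction_indicator n C"
  shows "extremal_assignment n (Z_of n C) \<and> smooth n (Z_of n C)"
  using extremal_assignment_Z_of[OF assms] smooth_Z_of by blast

end
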